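(* Let $A\in\mathbb{R}^{m\times N}$ satisfy the robust binary null space property with constants $0<\rho<1$ and $\tau>0$ relative to a set $K\subseteq[N]$. Let $b=A\mathbb{1}_K+e$ with $e\in\mathbb{R}^m$, $\|e\|_2\le\eta$. Then every solution $\hat z$ of $$\min\|z\|_1\quad\text{subject to}\quad \|Az-b\|_2\le\eta\ \text{ and }\ z\in[0,1]^N$$ satisfies $\|\hat z-\mathbb{1}_K\|_1\le\frac{4\tau}{1-\rho}\eta$.
   Context: $K^C=[N]\setminus K$; $\mathbb{1}_K$ has entries $1$ on $K$, $0$ elsewhere. $H_K=\{w\in\mathbb{R}^N: w_i\le 0 \text{ for } i\in K,\ w_i\ge 0\text{ for } i\in K^C\}$. $A$ satisfies the robust binary null space property with constants $\rho,\tau$ relative to $K$ if $-\sum_{i\in K}v_i\le\rho\sum_{i\in K^C}v_i+\tau\|Av\|_2$ for every $v\in H_K$. *)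

theory Defs
  imports "HOL-Analysis.Analysis"
begin

text \<open>Vectors in R^N are real^'n (index type 'n with CARD('n) = N); matrices A in R^(m x N)
are real^'n^'m. The Euclidean norm on real^'m is the library norm.\<close>

definition l1norm :: "real^'n \<Rightarrow> real" where
  "l1norm v = (\<Sum>i\<in>UNIV. \<bar>v $ i\<bar>)"

definition indic_vec :: "'n set \<Rightarrow> real^'n" where
  "indic_vec K = (\<chi> i. if i \<in> K then 1 else 0)"

definition H_set :: "'n set \<Rightarrow> (real^'n) set" where
  "H_set K = {w. (\<forall>i\<in>K. w $ i \<le> 0) \<and> (\<forall>i\<in>- K. w $ i \<ge> 0)}"

definition robust_binary_nsp :: "real^'n^'m \<Rightarrow> real \<Rightarrow> real \<Rightarrow> 'n set \<Rightarrow> bool" where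
  "robust_binary_nsp A \<rho> \<tau> K \<longleftrightarrow>
     (\<forall>v\<in>H_set K. - (\<Sum>i\<in>K. v $ i) \<le> \<rho> * (\<Sum>i\<in>- K. v $ i) + \<tau> * norm (A *v v))"

definition feasible :: "real^'n^'m \<Rightarrow> real^'m \<Rightarrow> real \<Rightarrow> real^'n \<Rightarrow> bool" where
  "feasible A b \<eta> z \<longleftrightarrow> norm (A *v z - b) \<le> \<eta> \<and> (\<forall>i. 0 \<le> z $ i \<and> z $ i \<le> 1)"

definition is_l1_solution :: "real^'n^'m \<Rightarrow> real^'m \<Rightarrow> real \<Rightarrow> real^'n \<Rightarrow> bool" where
  "is_l1_solution A b \<eta> z \<longleftrightarrow> feasible A b \<eta> z \<and> (\<forall>y. feasible A b \<eta> y \<longrightarrow> l1norm z \<le> l1norm y)"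

end

theory Submission
  imports Defs
begin

text \<open>Put v = zhat - 1_K. The box constraint puts v in H_K, and the l1-norm of v is S + T
  with S = - (sum of v over K) and T = (sum of v over the complement), both nonnegative.
  Since 1_K is feasible and l1norm zhat = |K| - S + T, minimality gives T \<le> S. The null
  space property then yields S \<le> \<rho> S + \<tau> norm (A v), and norm (A v) \<le> 2 \<eta> by the
  triangle inequality, so l1norm v \<le> 2 S \<le> 4 \<tau> \<eta> / (1 - \<rho>).\<close>

lemma sum_UNIV_split_Compl:
  fixes f :: "'n::finite \<Rightarrow> 'a::comm_monoid_add"
  shows "(\<Sum>i\<in>UNIV. f i) = (\<Sum>i\<in>K. f i) + (\<Sum>i\<in>-K. f i)"
  using sum.Int_Diff[of UNIV f K] by (simp add: Compl_eq_Diff_UNIV)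

lemma l1norm_nonneg_eq_sum:
  assumes "\<And>i. 0 \<le> z $ i"
  shows "l1norm z = (\<Sum>i\<in>UNIV. z $ i)"
  unfolding l1norm_def using assms by simp

lemma l1norm_indic_vec: "l1norm (indic_vec K :: real^'n) = real (card K)"
  by (simp add: l1norm_nonneg_eq_sum indic_vec_def sum.If_cases)

lemma l1norm_H_set:
  assumes "v \<in> H_set K"
  shows "l1norm v = - (\<Sum>i\<in>K. v $ i) + (\<Sum>i\<in>-K. v $ i)"
proof -
  have "(\<Sum>i\<in>K. \<bar>v $ i\<bar>) = - (\<Sum>i\<in>K. v $ i)"
    using assms by (simp add: H_set_def abs_of_nonpos sum_negf[symmetric])
  moreover have "(\<Sum>i\<in>-K. \<bar>v $ i\<bar>) = (\<Sum>i\<in>-K. v $ i)"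
    using assms by (simp add: H_set_def)
  ultimately show ?thesis
    unfolding l1norm_def by (simp add: sum_UNIV_split_Compl[of _ K])
qed

lemma diff_indic_vec_in_H_set:
  assumes "\<And>i. 0 \<le> z $ i \<and> z $ i \<le> 1"
  shows "z - indic_vec K \<in> H_set K"
  using assms by (simp add: H_set_def indic_vec_def)

lemma feasible_indic_vec:
  assumes "b = A *v indic_vec K + e" and "norm e \<le> \<eta>"
  shows "feasible A b \<eta> (indic_vec K)"
  using assms by (simp add: feasible_def indic_vec_def)

lemma norm_residual_diff_le:
  fixes A :: "real^'n^'m"
  assumes "norm (A *v z - b) \<le> \<eta>" and "norm (A *v y - b) \<le> \<eta>"
  shows "norm (A *v (z - y)) \<le> 2 * \<eta>"
proof -
  have "A *v (z - y) = (A *v z - b) - (A *v y - b)"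
    by (simp add: matrix_vector_mult_diff_distrib)
  then show ?thesis
    using assms norm_triangle_ineq4[of "A *v z - b" "A *v y - b"] by simp
qed

text \<open>The null space property only has to be applied to vectors whose entries sum to a
  nonpositive number: this is exactly the information \<open>\<ell>\<^sub>1\<close>-minimality provides.\<close>

lemma robust_binary_nsp_l1norm_le:
  assumes nsp: "robust_binary_nsp A \<rho> \<tau> K"
    and "0 \<le> \<rho>" and "\<rho> < 1"
    and H: "v \<in> H_set K"
    and sum_nonpos: "(\<Sum>i\<in>UNIV. v $ i) \<le> 0"
  shows "l1norm v \<le> 2 * \<tau> / (1 - \<rho>) * norm (A *v v)"
proof -
  define S where "S = - (\<Sum>i\<in>K. v $ i)"
  define T where "T = (\<Sum>i\<in>-K. v $ i)"
  have "T \<le> S"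
    using sum_nonpos by (simp add: S_def T_def sum_UNIV_split_Compl[of _ K])
  have "S \<le> \<rho> * T + \<tau> * norm (A *v v)"
    using nsp H unfolding robust_binary_nsp_def S_def T_def by blast
  also have "\<dots> \<le> \<rho> * S + \<tau> * norm (A *v v)"
    using \<open>T \<le> S\<close> \<open>0 \<le> \<rho>\<close> by (simp add: mult_left_mono)
  finally have "S \<le> \<tau> / (1 - \<rho>) * norm (A *v v)"
    using \<open>\<rho> < 1\<close> by (simp add: field_simps)
  moreover have "l1norm v = S + T"
    using l1norm_H_set[OF H] by (simp add: S_def T_def)
  ultimately show ?thesis
    using \<open>T \<le> S\<close> by simp
qed

theorem theorem2p13:
  fixes A :: "real^'n^'m" and K :: "'n set" and e :: "real^'m" and b :: "real^'m"
    and \<rho> \<tau> \<eta> :: real and zhat :: "real^'n"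
  assumes "robust_binary_nsp A \<rho> \<tau> K"
    and "0 < \<rho>" and "\<rho> < 1" and "0 < \<tau>"
    and "b = A *v indic_vec K + e"
    and "norm e \<le> \<eta>"
    and "is_l1_solution A b \<eta> zhat"
  shows "l1norm (zhat - indic_vec K) \<le> 4 * \<tau> / (1 - \<rho>) * \<eta>"
proof -
  define v where "v = zhat - indic_vec K"
  have fi: "feasible A b \<eta> (indic_vec K)"
    using assms(5,6) by (rule feasible_indic_vec)
  have box: "\<And>i. 0 \<le> zhat $ i \<and> zhat $ i \<le> 1" and res: "norm (A *v zhat - b) \<le> \<eta>"
    using assms(7) by (auto simp: is_l1_solution_def feasible_def)
  have "l1norm zhat \<le> l1norm (indic_vec K)"
    using assms(7) fi by (simp add: is_l1_solution_def)
  then have "(\<Sum>i\<in>UNIV. v $ i) \<le> 0"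
    using box by (simp add: v_def l1norm_nonneg_eq_sum l1norm_indic_vec sum_subtractf
        indic_vec_def sum.If_cases)
  then have "l1norm v \<le> 2 * \<tau> / (1 - \<rho>) * norm (A *v v)"
    using robust_binary_nsp_l1norm_le[OF assms(1)] diff_indic_vec_in_H_set[OF box] assms(2,3)
    by (simp add: v_def)
  also have "\<dots> \<le> 2 * \<tau> / (1 - \<rho>) * (2 * \<eta>)"
    using norm_residual_diff_le[OF res] fi assms(3,4)
    by (intro mult_left_mono) (auto simp: v_def feasible_def)
  finally show ?thesis
    by (simp add: v_def)
qed

end
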